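(* Let $g:[0,1]\to[0,1]$ be such that $g|_{\mathcal{X}_n}\in\mathcal{G}_n^{(d)}$ and $g\in C^\alpha[0,1]$ with $\alpha\ge p\ge1$, where $p$ is the order of the chosen quadrature rule, and assume $E_n^{(p)}[g]\le C_p\,2^{-pn}\|g^{(p)}\|_\infty$. Fix $\delta\in(0,1)$. To achieve total integration error $|I[g]-\hat a|\le\varepsilon$ with probability at least $1-\delta$, the following resources suffice: \[ n\ge\frac1p\log_2\Bigl(\frac{2C_p\|g^{(p)}\|_\infty}{\varepsilon}\Bigr),\qquad M\ge\frac{2C_{\mathrm{est}}}{\varepsilon\sqrt\delta},\qquad\text{gate count per oracle call}=\sum_{k=0}^{d}\binom{n}{k}. \] Substituting the minimal $n^*=\bigl\lceil\frac1p\log_2(2C_p\|g^{(p)}\|_\infty/\varepsilon)\bigr\rceil$ and taking $\delta$ a fixed constant, the total gate count across all $M$ oracle calls, as a function of $\varepsilon$ alone (for fixed $d$), is \[ \mathcal{O}\Bigl(\Bigl(\frac{\log(1/\varepsilon)}{p}\Bigr)^d\cdot\frac1\varepsilon\Bigr). \]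
   Context: $I[g]=\int_0^1g(x)\,dx$. For $n\ge1$, $\mathcal{X}_n=\{i/2^n:i=0,\dots,2^n-1\}$; $Q_n^{(p)}[g]$ denotes the approximation of $I[g]$ by a quadrature rule of order $p$ on $\mathcal{X}_n$, and $E_n^{(p)}[g]=|I[g]-Q_n^{(p)}[g]|$; $C_p>0$ is a constant depending only on $p$. The angle map of $h:\mathcal{X}_n\to[0,1]$ is $\Theta_h(b)=2\arcsin\sqrt{h(x_{i(b)})}$, $b\in\{0,1\}^n$, $i(b)=\sum_kb_k2^k$; $\mathcal{G}_n^{(d)}$ is the set of $h$ whose angle map, written as a multilinear polynomial $\sum_{S\subseteq\{0,\dots,n-1\}}c_S\prod_{j\in S}b_j$, has degree $\le d$. Quantum amplitude estimation setting: an amplitude oracle built from $g|_{\mathcal{X}_n}$ encodes the amplitude $a=Q_n^{(p)}[g]$, and each oracle call uses $\sum_{k=0}^d\binom nk$ controlled-$R_Y$ gates (the monomial factorisation of the encoding operator). The maximum-likelihood amplitude estimator $\hat a$ with total oracle cost $M$ (number of Grover-iterate applications weighted by depth) is assumed to satisfy $\mathbb{E}[(\hat a-a)^2]^{1/2}\le C_{\mathrm{est}}/M$ for a constant $C_{\mathrm{est}}>0$, hence $\mathbb{P}(|\hat a-a|\le C_{\mathrm{est}}/(M\sqrt\delta))\ge1-\delta$ for every $\delta\in(0,1)$. *)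

theory Defs
  imports "HOL-Probability.Probability" "HOL-Library.Landau_Symbols"
begin

definition grid :: "nat \<Rightarrow> real set" where
  "grid n = {real i / 2 ^ n | i. i < 2 ^ n}"

definition bit_index :: "nat \<Rightarrow> (nat \<Rightarrow> bool) \<Rightarrow> nat" where
  "bit_index n b = (\<Sum>k<n. (if b k then 2 ^ k else 0))"

definition angle_map :: "nat \<Rightarrow> (real \<Rightarrow> real) \<Rightarrow> (nat \<Rightarrow> bool) \<Rightarrow> real" where
  "angle_map n h b = 2 * arcsin (sqrt (h (real (bit_index n b) / 2 ^ n)))"

text \<open>G_n^(d): functions h : X_n -> [0,1] whose angle map, written as a multilinear
  polynomial sum_{S subseteq {0..n-1}} c_S prod_{j in S} b_j, has degree at most d.\<close>
definition G_class :: "nat \<Rightarrow> nat \<Rightarrow> (real \<Rightarrow> real) set" where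
  "G_class n d = {h. (\<forall>x\<in>grid n. 0 \<le> h x \<and> h x \<le> 1) \<and>
      (\<exists>c :: nat set \<Rightarrow> real. (\<forall>S. d < card S \<longrightarrow> c S = 0) \<and>
         (\<forall>b. angle_map n h b =
                (\<Sum>S\<in>Pow {..<n}. c S * (\<Prod>j\<in>S. (if b j then 1 else 0)))))}"

definition has_derivs_on :: "nat \<Rightarrow> (real \<Rightarrow> real) \<Rightarrow> (nat \<Rightarrow> real \<Rightarrow> real) \<Rightarrow> bool" where
  "has_derivs_on k g D \<longleftrightarrow>
     (\<forall>x\<in>{0..1}. D 0 x = g x) \<and>
     (\<forall>j<k. \<forall>x\<in>{0..1}. (D j has_real_derivative D (Suc j) x) (at x within {0..1})) \<and>
     continuous_on {0..1} (D k)"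

definition C_alpha :: "real \<Rightarrow> (real \<Rightarrow> real) \<Rightarrow> bool" where
  "C_alpha \<alpha> g \<longleftrightarrow> 0 \<le> \<alpha> \<and>
     (\<exists>D. has_derivs_on (nat \<lfloor>\<alpha>\<rfloor>) g D \<and>
        (\<exists>L. \<forall>x\<in>{0..1}. \<forall>y\<in>{0..1}.
            \<bar>D (nat \<lfloor>\<alpha>\<rfloor>) x - D (nat \<lfloor>\<alpha>\<rfloor>) y\<bar> \<le> L * \<bar>x - y\<bar> powr (\<alpha> - of_int \<lfloor>\<alpha>\<rfloor>)))"

definition deriv_sup_norm :: "nat \<Rightarrow> (real \<Rightarrow> real) \<Rightarrow> real" where
  "deriv_sup_norm p g = (SOME N. \<exists>D. has_derivs_on p g D \<and> N = (SUP x\<in>{0..1}. \<bar>D p x\<bar>))"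

text \<open>Number of controlled-R_Y gates per oracle call.\<close>
definition gate_count :: "nat \<Rightarrow> nat \<Rightarrow> nat" where
  "gate_count n d = (\<Sum>k\<le>d. n choose k)"

end

theory Submission
  imports Defs
begin

text \<open>By the triangle inequality, the error |I[g] - a'| of the estimate a' splits into the
  quadrature error |I[g] - Q_n[g]|, which is at most \<epsilon>/2 as soon as
  2^(pn) \<ge> 2 C_p N / \<epsilon> with N the sup norm of the p-th derivative, and the estimation error
  |a' - Q_n[g]|, which is at most C_est / (M \<surd>\<delta>) \<le> \<epsilon>/2 with probability at least 1 - \<delta>.
  For the cost, the minimal n is O(log(1/\<epsilon>)/p), the number of gates per call,
  \<Sum>_{k \<le> d} (n choose k), is at most (d+1)(n+1)^d, and the minimal M is O(1/\<epsilon>).\<close>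

lemma gate_count_le: "real (gate_count n d) \<le> real (d + 1) * (real n + 1) ^ d"
proof -
  have binomial_le: "real (n choose k) \<le> (real n + 1) ^ d" if "k \<le> d" for k
  proof (cases "k \<le> n")
    case True
    have "real (n choose k) \<le> real n ^ k"
      using binomial_le_pow[OF True] by (metis of_nat_le_iff of_nat_power)
    also have "\<dots> \<le> (real n + 1) ^ k" by (rule power_mono) auto
    also have "\<dots> \<le> (real n + 1) ^ d" using that by (intro power_increasing) auto
    finally show ?thesis .
  next
    case False
    then show ?thesis by (simp add: binomial_eq_0)
  qed
  have "real (gate_count n d) = (\<Sum>k\<le>d. real (n choose k))"
    by (simp add: gate_count_def)
  also have "\<dots> \<le> (\<Sum>k\<le>d. (real n + 1) ^ d)"
    using binomial_le by (intro sum_mono) simp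
  also have "\<dots> = real (d + 1) * (real n + 1) ^ d" by simp
  finally show ?thesis .
qed

lemma dyadic_error_le_half:
  fixes C N \<epsilon> :: real and p n :: nat
  assumes "C > 0" "N \<ge> 0" "p > 0" "\<epsilon> > 0"
    and "real n \<ge> 1 / real p * log 2 (2 * C * N / \<epsilon>)"
  shows "C * 2 powr (- (real p * real n)) * N \<le> \<epsilon> / 2"
proof (cases "N = 0")
  case False
  with assms have pos: "2 * C * N / \<epsilon> > 0" by simp
  have "log 2 (2 * C * N / \<epsilon>) \<le> real p * real n"
    using assms(3,5) by (simp add: field_simps)
  then have "2 * C * N / \<epsilon> \<le> 2 powr (real p * real n)"
    using pos by (simp add: log_le_iff)
  then have "C * N \<le> \<epsilon> / 2 * 2 powr (real p * real n)"
    using assms(4) by (simp add: field_simps)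
  then show ?thesis
    by (simp add: powr_minus field_simps)
qed (use assms in simp)

lemma estimation_radius_le_half:
  fixes C \<delta> \<epsilon> :: real and M :: nat
  assumes "C > 0" "\<delta> > 0" "\<epsilon> > 0" "real M \<ge> 2 * C / (\<epsilon> * sqrt \<delta>)"
  shows "M > 0" and "C / (real M * sqrt \<delta>) \<le> \<epsilon> / 2"
proof -
  have "2 * C / (\<epsilon> * sqrt \<delta>) > 0" using assms(1-3) by simp
  with assms(4) show M: "M > 0" by simp
  with assms show "C / (real M * sqrt \<delta>) \<le> \<epsilon> / 2" by (simp add: field_simps)
qed

lemma (in prob_space) prob_abs_diff_le_triangle:
  fixes X :: "'a \<Rightarrow> real" and a b r s e q :: real
  assumes "X \<in> borel_measurable M" "\<bar>a - b\<bar> \<le> r" "r + s \<le> e"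
    and "q \<le> prob {\<omega>\<in>space M. \<bar>X \<omega> - b\<bar> \<le> s}"
  shows "q \<le> prob {\<omega>\<in>space M. \<bar>a - X \<omega>\<bar> \<le> e}"
proof -
  have "\<bar>a - X \<omega>\<bar> \<le> e" if "\<bar>X \<omega> - b\<bar> \<le> s" for \<omega>
    using that assms(2,3) by linarith
  then have "{\<omega>\<in>space M. \<bar>X \<omega> - b\<bar> \<le> s} \<subseteq> {\<omega>\<in>space M. \<bar>a - X \<omega>\<bar> \<le> e}"
    by auto
  moreover have "{\<omega>\<in>space M. \<bar>a - X \<omega>\<bar> \<le> e} \<in> events"
    using assms(1) by measurable
  ultimately have "prob {\<omega>\<in>space M. \<bar>X \<omega> - b\<bar> \<le> s} \<le> prob {\<omega>\<in>space M. \<bar>a - X \<omega>\<bar> \<le> e}"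
    by (rule finite_measure_mono)
  with assms(4) show ?thesis by linarith
qed

lemma bigo_nat_ceiling:
  assumes "f \<in> O[F](g)" "(\<lambda>_. 1) \<in> O[F](g)"
  shows "(\<lambda>x. real (nat \<lceil>f x\<rceil>)) \<in> O[F](g)"
proof -
  have "real (nat \<lceil>y\<rceil>) \<le> \<bar>y\<bar> + 1" for y :: real
    by (cases "y \<ge> 0") (auto simp: of_nat_nat)
  then have "(\<lambda>x. real (nat \<lceil>f x\<rceil>)) \<in> O[F](\<lambda>x. \<bar>f x\<bar> + 1)"
    by (intro bigoI[of _ 1]) auto
  also have "(\<lambda>x. \<bar>f x\<bar> + 1) \<in> O[F](g)"
    using assms by (intro sum_in_bigo) simp_all
  finally show ?thesis .
qed

lemma gate_count_bigo:
  assumes "(\<lambda>x. real (k x)) \<in> O[F](f)" "(\<lambda>_. 1) \<in> O[F](f)"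
  shows "(\<lambda>x. real (gate_count (k x) d)) \<in> O[F](\<lambda>x. f x ^ d)"
proof -
  have "(\<lambda>x. real (gate_count (k x) d)) \<in> O[F](\<lambda>x. (real (k x) + 1) ^ d)"
    using gate_count_le by (intro bigoI[of _ "real (d + 1)"]) auto
  also have "(\<lambda>x. (real (k x) + 1) ^ d) \<in> O[F](\<lambda>x. f x ^ d)"
    using assms by (intro landau_o.big_power sum_in_bigo)
  finally show ?thesis .
qed

lemma total_gate_count_bigo:
  fixes c K :: real and p d :: nat
  assumes "K \<ge> 0" "p > 0"
  shows "(\<lambda>\<epsilon>. real (nat \<lceil>c / \<epsilon>\<rceil> * gate_count (nat \<lceil>1 / real p * log 2 (K / \<epsilon>)\<rceil>) d))
           \<in> O[at_right 0](\<lambda>\<epsilon>. (ln (1 / \<epsilon>) / real p) ^ d / \<epsilon>)"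
proof -
  have one_ln: "(\<lambda>_. 1) \<in> O[at_right 0](\<lambda>\<epsilon>::real. ln (1 / \<epsilon>))" by real_asymp
  have "(\<lambda>\<epsilon>. log 2 (K / \<epsilon>)) \<in> O[at_right 0](\<lambda>\<epsilon>. ln (1 / \<epsilon>))"
  proof (cases "K = 0")
    case False
    with assms(1) show ?thesis by real_asymp
  qed (simp add: log_def)
  then have gates: "(\<lambda>\<epsilon>. real (gate_count (nat \<lceil>1 / real p * log 2 (K / \<epsilon>)\<rceil>) d))
                     \<in> O[at_right 0](\<lambda>\<epsilon>. ln (1 / \<epsilon>) ^ d)"
    using one_ln assms(2) by (intro gate_count_bigo bigo_nat_ceiling) simp_all
  have calls: "(\<lambda>\<epsilon>. real (nat \<lceil>c / \<epsilon>\<rceil>)) \<in> O[at_right 0](\<lambda>\<epsilon>. 1 / \<epsilon>)"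
  proof (rule bigo_nat_ceiling)
    show "(\<lambda>\<epsilon>. c / \<epsilon>) \<in> O[at_right 0](\<lambda>\<epsilon>. 1 / \<epsilon>)"
      using landau_o.big.cmult_in_iff[of c "\<lambda>\<epsilon>. 1 / \<epsilon>"] by (cases "c = 0") auto
  qed real_asymp
  have "(\<lambda>\<epsilon>. real (nat \<lceil>c / \<epsilon>\<rceil> * gate_count (nat \<lceil>1 / real p * log 2 (K / \<epsilon>)\<rceil>) d))
          \<in> O[at_right 0](\<lambda>\<epsilon>. 1 / \<epsilon> * ln (1 / \<epsilon>) ^ d)"
    unfolding of_nat_mult by (rule landau_o.big.mult[OF calls gates])
  also have "(\<lambda>\<epsilon>. 1 / \<epsilon> * ln (1 / \<epsilon>) ^ d)
               = (\<lambda>\<epsilon>. real p ^ d * ((ln (1 / \<epsilon>) / real p) ^ d / \<epsilon>))"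
    using assms(2) by (simp add: power_divide)
  finally show ?thesis using assms(2) by (subst (asm) landau_o.big.cmult) auto
qed

theorem mainTheorem4:
  fixes g :: "real \<Rightarrow> real" and p d :: nat and \<alpha> Cp Cest \<delta> :: real
    and Q :: "nat \<Rightarrow> real"
    and \<Omega> :: "'w measure" and ahat :: "nat \<Rightarrow> nat \<Rightarrow> 'w \<Rightarrow> real"
  assumes g_range: "\<forall>x\<in>{0..1}. 0 \<le> g x \<and> g x \<le> 1"
    and p_ge: "p \<ge> 1" and alpha_ge: "\<alpha> \<ge> real p" and g_smooth: "C_alpha \<alpha> g"
    and Cp_pos: "Cp > 0" and Cest_pos: "Cest > 0"
    and quad_err: "\<forall>n\<ge>1. \<bar>integral {0..1} g - Q n\<bar>
                     \<le> Cp * 2 powr (- (real p * real n)) * deriv_sup_norm p g"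
    and prob: "prob_space \<Omega>"
    and ahat_meas: "\<forall>n M. ahat n M \<in> borel_measurable \<Omega>"
    and estimator: "\<forall>n\<ge>1. \<forall>M>0. \<forall>\<delta>'. 0 < \<delta>' \<and> \<delta>' < 1 \<longrightarrow>
        measure \<Omega> {\<omega>\<in>space \<Omega>. \<bar>ahat n M \<omega> - Q n\<bar> \<le> Cest / (real M * sqrt \<delta>')} \<ge> 1 - \<delta>'"
    and delta: "0 < \<delta>" "\<delta> < 1"
  shows "(\<forall>\<epsilon>>0. \<forall>n\<ge>1. \<forall>M::nat. g \<in> G_class n d \<longrightarrow>
            real n \<ge> 1 / real p * log 2 (2 * Cp * deriv_sup_norm p g / \<epsilon>) \<longrightarrow>
            real M \<ge> 2 * Cest / (\<epsilon> * sqrt \<delta>) \<longrightarrow>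
            measure \<Omega> {\<omega>\<in>space \<Omega>. \<bar>integral {0..1} g - ahat n M \<omega>\<bar> \<le> \<epsilon>} \<ge> 1 - \<delta>)
       \<and> (\<lambda>\<epsilon>::real. real (nat \<lceil>2 * Cest / (\<epsilon> * sqrt \<delta>)\<rceil> *
              gate_count (nat \<lceil>1 / real p * log 2 (2 * Cp * deriv_sup_norm p g / \<epsilon>)\<rceil>) d))
         \<in> O[at_right 0](\<lambda>\<epsilon>. (ln (1 / \<epsilon>) / real p) ^ d / \<epsilon>)"
proof -
  have p_pos: "p > 0" using p_ge by simp
  have N_nonneg: "deriv_sup_norm p g \<ge> 0"
  proof -
    have "0 \<le> Cp * 2 powr (- real p) * deriv_sup_norm p g"
      using quad_err[rule_format, of 1]
      by (metis abs_ge_zero of_nat_1 mult_1_right order_trans order_refl)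
    moreover have "Cp * 2 powr (- real p) > 0" using Cp_pos by simp
    ultimately show ?thesis by (auto simp: zero_le_mult_iff)
  qed
  interpret prob_space \<Omega> by (rule prob)
  show ?thesis
  proof (intro conjI allI impI)
    fix \<epsilon> :: real and n M :: nat
    assume \<epsilon>: "\<epsilon> > 0" and n: "n \<ge> 1" and "g \<in> G_class n d"
      and n_large: "real n \<ge> 1 / real p * log 2 (2 * Cp * deriv_sup_norm p g / \<epsilon>)"
      and M_large: "real M \<ge> 2 * Cest / (\<epsilon> * sqrt \<delta>)"
    have quadrature: "\<bar>integral {0..1} g - Q n\<bar> \<le> \<epsilon> / 2"
      using quad_err n dyadic_error_le_half[OF Cp_pos N_nonneg p_pos \<epsilon> n_large] by force
    note radius = estimation_radius_le_half[OF Cest_pos delta(1) \<epsilon> M_large]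
    have estimate:
      "1 - \<delta> \<le> prob {\<omega>\<in>space \<Omega>. \<bar>ahat n M \<omega> - Q n\<bar> \<le> Cest / (real M * sqrt \<delta>)}"
      using estimator n radius(1) delta by blast
    have "\<epsilon> / 2 + Cest / (real M * sqrt \<delta>) \<le> \<epsilon>" using radius(2) by linarith
    then show "1 - \<delta> \<le> prob {\<omega>\<in>space \<Omega>. \<bar>integral {0..1} g - ahat n M \<omega>\<bar> \<le> \<epsilon>}"
      by (rule prob_abs_diff_le_triangle[OF ahat_meas[rule_format] quadrature _ estimate])
  next
    have "\<And>\<epsilon>. 2 * Cest / (\<epsilon> * sqrt \<delta>) = 2 * Cest / sqrt \<delta> / \<epsilon>" by simp
    then show "(\<lambda>\<epsilon>::real. real (nat \<lceil>2 * Cest / (\<epsilon> * sqrt \<delta>)\<rceil> *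
              gate_count (nat \<lceil>1 / real p * log 2 (2 * Cp * deriv_sup_norm p g / \<epsilon>)\<rceil>) d))
         \<in> O[at_right 0](\<lambda>\<epsilon>. (ln (1 / \<epsilon>) / real p) ^ d / \<epsilon>)"
      using N_nonneg Cp_pos p_pos by (simp only:) (rule total_gate_count_bigo; simp)
  qed
qed

end
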